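(* Let $\beta\in\mathcal{A}$ and let $f=\sum_{\alpha\in\mathcal{A}}c_\alpha\mathrm{e}^\alpha\in C_X(\mathcal{A},\beta)$ with $c_\beta<0$. If a nonzero $\nu\in\mathbb{R}^{\mathcal{A}}$ satisfies $\mathbf{1}^T\nu=0$ and $\sigma_X(-\mathcal{A}\nu)+D(\nu_{\setminus\beta},e\,c_{\setminus\beta})\le c_\beta$, but $\nu$ is not an $X$-circuit of $\mathcal{A}$, then $f$ does not generate an extreme ray of $C_X(\mathcal{A},\beta)$.
   Context: $X\subset\mathbb{R}^n$ is a nonempty closed convex set and $\mathcal{A}\subset\mathbb{R}^n$ is a nonempty finite set such that the functions $x\mapsto\exp(\alpha^Tx)$, $\alpha\in\mathcal{A}$, are linearly independent on $X$. $\mathbb{R}^{\mathcal{A}}$ denotes real vectors indexed by $\mathcal{A}$; $c_{\setminus\beta}$ deletes the $\beta$-entry of $c$. $\mathcal{A}\nu=\sum_{\alpha}\alpha\nu_\alpha$. $\sigma_X(y)=\sup\{y^Tx:x\in X\}$. $N_\beta=\{\nu\in\mathbb{R}^{\mathcal{A}}:\nu_\alpha\ge0\ \forall\alpha\neq\beta,\ \sum_\alpha\nu_\alpha=0\}$. A vector $\nu^\star\in N_\beta$ is an $X$-circuit of $\mathcal{A}$ if (1) $\nu^\star\neq0$, (2) $\sigma_X(-\mathcal{A}\nu^\star)<\infty$, and (3) $\nu^\star$ cannot be written as a convex combination of two non-proportional vectors $\nu^{(1)},\nu^{(2)}\in N_\beta$ such that the map $\nu\mapsto\sigma_X(-\mathcal{A}\nu)$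 is affine on the segment $[\nu^{(1)},\nu^{(2)}]$. A signomial supported on $\mathcal{A}$ is $f=\sum_{\alpha}c_\alpha\mathrm{e}^\alpha$ with $\mathrm{e}^\alpha(x)=\exp(\alpha^Tx)$, identified with $c$. The $X$-AGE cone $C_X(\mathcal{A},\beta)$ is the set of signomials supported on $\mathcal{A}$ that are nonnegative on $X$ with $c_\alpha\ge0$ for all $\alpha\ne\beta$. The relative entropy is $D(\nu,c)=\sum_\alpha\nu_\alpha\log(\nu_\alpha/c_\alpha)$, continuously extended to nonnegative arguments, and $+\infty$ if $\nu$ or $c$ has a negative entry; $e$ is Euler's number. *)

theory Defs
  imports "HOL-Analysis.Analysis"
begin

text \<open>Vectors in R^A are represented as functions 'a => real that vanish outside A.\<close>

definition supp_in :: "'a set \<Rightarrow> ('a \<Rightarrow> real) \<Rightarrow> bool" where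
  "supp_in A v \<longleftrightarrow> (\<forall>a. a \<notin> A \<longrightarrow> v a = 0)"

definition support_fun :: "'a::euclidean_space set \<Rightarrow> 'a \<Rightarrow> ereal" where
  "support_fun X y = (SUP x\<in>X. ereal (y \<bullet> x))"

definition exp_mat :: "'a::euclidean_space set \<Rightarrow> ('a \<Rightarrow> real) \<Rightarrow> 'a" where
  "exp_mat A nu = (\<Sum>a\<in>A. nu a *\<^sub>R a)"

definition rel_entr_term :: "real \<Rightarrow> real \<Rightarrow> ereal" where
  "rel_entr_term v c = (if v = 0 then 0 else if c = 0 then \<infinity> else ereal (v * ln (v / c)))"

definition rel_entr :: "'i set \<Rightarrow> ('i \<Rightarrow> real) \<Rightarrow> ('i \<Rightarrow> real) \<Rightarrow> ereal" where
  "rel_entr I nu c = (if \<exists>i\<in>I. nu i < 0 \<or> c i < 0 then \<infinity>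
                      else (\<Sum>i\<in>I. rel_entr_term (nu i) (c i)))"

definition N_set :: "'a set \<Rightarrow> 'a \<Rightarrow> ('a \<Rightarrow> real) set" where
  "N_set A \<beta> = {nu. supp_in A nu \<and> (\<forall>a\<in>A - {\<beta>}. nu a \<ge> 0) \<and> (\<Sum>a\<in>A. nu a) = 0}"

definition proportional :: "('a \<Rightarrow> real) \<Rightarrow> ('a \<Rightarrow> real) \<Rightarrow> bool" where
  "proportional u v \<longleftrightarrow> (\<exists>t. u = (\<lambda>a. t * v a)) \<or> (\<exists>t. v = (\<lambda>a. t * u a))"

definition affine_on_segment ::
  "'a::euclidean_space set \<Rightarrow> 'a set \<Rightarrow> ('a \<Rightarrow> real) \<Rightarrow> ('a \<Rightarrow> real) \<Rightarrow> bool" where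
  "affine_on_segment X A nu1 nu2 \<longleftrightarrow>
     (\<exists>p q::real. \<forall>t\<in>{0..1}.
        support_fun X (- exp_mat A (\<lambda>a. (1 - t) * nu1 a + t * nu2 a)) = ereal (p + q * t))"

definition X_circuit :: "'a::euclidean_space set \<Rightarrow> 'a set \<Rightarrow> 'a \<Rightarrow> ('a \<Rightarrow> real) \<Rightarrow> bool" where
  "X_circuit X A \<beta> nu \<longleftrightarrow>
     nu \<in> N_set A \<beta> \<and> nu \<noteq> (\<lambda>_. 0) \<and>
     support_fun X (- exp_mat A nu) < \<infinity> \<and>
     \<not> (\<exists>nu1 nu2 l. nu1 \<in> N_set A \<beta> \<and> nu2 \<in> N_set A \<beta> \<and> \<not> proportional nu1 nu2 \<and>
            0 < l \<and> l < 1 \<and> nu = (\<lambda>a. l * nu1 a + (1 - l) * nu2 a) \<and>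
            affine_on_segment X A nu1 nu2)"

definition AGE_cone :: "'a::euclidean_space set \<Rightarrow> 'a set \<Rightarrow> 'a \<Rightarrow> ('a \<Rightarrow> real) set" where
  "AGE_cone X A \<beta> = {c. supp_in A c \<and> (\<forall>a\<in>A - {\<beta>}. c a \<ge> 0) \<and>
                        (\<forall>x\<in>X. (\<Sum>a\<in>A. c a * exp (a \<bullet> x)) \<ge> 0)}"

definition generates_extreme_ray :: "('a \<Rightarrow> real) set \<Rightarrow> ('a \<Rightarrow> real) \<Rightarrow> bool" where
  "generates_extreme_ray K f \<longleftrightarrow> f \<in> K \<and> f \<noteq> (\<lambda>_. 0) \<and>
     (\<forall>g h. g \<in> K \<longrightarrow> h \<in> K \<longrightarrow> f = (\<lambda>a. g a + h a) \<longrightarrow>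
        (\<exists>s\<ge>0. g = (\<lambda>a. s * f a)) \<and> (\<exists>t\<ge>0. h = (\<lambda>a. t * f a)))"

end

theory Submission
  imports Defs
begin

text \<open>
  If \<nu> is not an X-circuit, it splits as \<nu> = l \<nu>1 + (1 - l) \<nu>2 with \<nu>1, \<nu>2 \<in> N_\<beta>
  non-proportional and \<sigma>_X(-A \<nu>) affine on the segment between them, so that
  \<sigma>_X(-A \<nu>) = \<sigma>_X(-A (l \<nu>1)) + \<sigma>_X(-A ((1 - l) \<nu>2)). Distributing each c_\<alpha> over the two
  parts in the ratio l \<nu>1_\<alpha> : (1 - l) \<nu>2_\<alpha>, and the slack at \<beta> accordingly, writes c = g + h
  where each summand carries its own relative entropy certificate and hence lies in the
  X-AGE cone. If c generated an extreme ray then g = s c, which forces l \<nu>1 = s \<nu>, so that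
  \<nu>1 and \<nu>2 would be proportional.
\<close>

subsection \<open>Support functions and relative entropy\<close>

lemma support_fun_ge: "x \<in> X \<Longrightarrow> ereal (y \<bullet> x) \<le> support_fun X y"
  unfolding support_fun_def by (rule SUP_upper)

lemma support_fun_neq_MInf: "X \<noteq> {} \<Longrightarrow> support_fun X y \<noteq> -\<infinity>"
  using support_fun_ge by (metis MInfty_neq_ereal(1) all_not_in_conv ereal_infty_less_eq(2))

lemma support_fun_scaleR_le:
  assumes "support_fun X y \<le> ereal r" "0 \<le> l"
  shows "support_fun X (l *\<^sub>R y) \<le> ereal (l * r)"
  unfolding support_fun_def
proof (rule SUP_least)
  fix x assume "x \<in> X"
  hence "y \<bullet> x \<le> r"
    using order.trans[OF support_fun_ge assms(1)] by simp
  thus "ereal (l *\<^sub>R y \<bullet> x) \<le> ereal (l * r)"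
    using assms(2) by (simp add: mult_left_mono)
qed

lemma exp_mat_scale: "exp_mat A (\<lambda>a. l * \<nu> a) = l *\<^sub>R exp_mat A \<nu>"
  unfolding exp_mat_def by (simp add: scaleR_sum_right)

lemma rel_entr_finite:
  assumes "finite I" "rel_entr I \<nu> c \<noteq> \<infinity>"
  shows "\<forall>i\<in>I. 0 \<le> \<nu> i"
    and "\<forall>i\<in>I. \<nu> i \<noteq> 0 \<longrightarrow> 0 < c i"
    and "rel_entr I \<nu> c = ereal (\<Sum>i\<in>I. \<nu> i * ln (\<nu> i / c i))"
proof -
  have no_neg: "\<forall>i\<in>I. 0 \<le> \<nu> i \<and> 0 \<le> c i"
    using assms(2) unfolding rel_entr_def by (metis not_le)
  hence sum_eq: "rel_entr I \<nu> c = (\<Sum>i\<in>I. rel_entr_term (\<nu> i) (c i))"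
    unfolding rel_entr_def by (auto simp: not_less)
  have term_finite: "rel_entr_term (\<nu> i) (c i) \<noteq> \<infinity>" if "i \<in> I" for i
    using assms sum_eq that sum_Pinfty by metis
  show "\<forall>i\<in>I. 0 \<le> \<nu> i" using no_neg by simp
  show pos: "\<forall>i\<in>I. \<nu> i \<noteq> 0 \<longrightarrow> 0 < c i"
  proof (intro ballI impI)
    fix i assume "i \<in> I" "\<nu> i \<noteq> 0"
    hence "c i \<noteq> 0" using term_finite[OF \<open>i \<in> I\<close>] unfolding rel_entr_term_def by auto
    thus "0 < c i" using no_neg \<open>i \<in> I\<close> by force
  qed
  have "rel_entr_term (\<nu> i) (c i) = ereal (\<nu> i * ln (\<nu> i / c i))" if "i \<in> I" for i
    using pos that unfolding rel_entr_term_def by (cases "\<nu> i = 0") force+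
  thus "rel_entr I \<nu> c = ereal (\<Sum>i\<in>I. \<nu> i * ln (\<nu> i / c i))"
    unfolding sum_eq sum_ereal[symmetric] by (rule sum.cong[OF refl])
qed

lemma entropy_condition_finite:
  fixes X :: "'a::euclidean_space set"
  assumes "finite A" "X \<noteq> {}"
    and "support_fun X (- exp_mat A \<nu>) + rel_entr (A - {\<beta>}) \<nu> (\<lambda>a. exp 1 * c a) \<le> ereal z"
  obtains s where "support_fun X (- exp_mat A \<nu>) = ereal s"
    and "\<forall>a\<in>A - {\<beta>}. 0 \<le> \<nu> a" and "\<forall>a\<in>A - {\<beta>}. \<nu> a \<noteq> 0 \<longrightarrow> 0 < c a"
    and "s + (\<Sum>a\<in>A - {\<beta>}. \<nu> a * ln (\<nu> a / (exp 1 * c a))) \<le> z"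
proof -
  let ?S = "support_fun X (- exp_mat A \<nu>)" and ?R = "rel_entr (A - {\<beta>}) \<nu> (\<lambda>a. exp 1 * c a)"
  have "?S \<noteq> -\<infinity>" using assms(2) by (rule support_fun_neq_MInf)
  hence "?R \<noteq> \<infinity>" using assms(3) by auto
  moreover have fin: "finite (A - {\<beta>})" using assms(1) by simp
  ultimately have R: "?R = ereal (\<Sum>a\<in>A - {\<beta>}. \<nu> a * ln (\<nu> a / (exp 1 * c a)))"
    and "\<forall>a\<in>A - {\<beta>}. 0 \<le> \<nu> a" "\<forall>a\<in>A - {\<beta>}. \<nu> a \<noteq> 0 \<longrightarrow> 0 < c a"
    using rel_entr_finite[OF fin \<open>?R \<noteq> \<infinity>\<close>] by (auto simp: zero_less_mult_iff)
  moreover obtain s where "?S = ereal s"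
    using \<open>?S \<noteq> -\<infinity>\<close> assms(3) R by (cases ?S) auto
  ultimately show ?thesis using that assms(3) by simp
qed

lemma affine_on_segment_values:
  assumes "affine_on_segment X A \<nu>1 \<nu>2" "0 \<le> l" "l \<le> 1"
    and "\<nu> = (\<lambda>a. l * \<nu>1 a + (1 - l) * \<nu>2 a)"
  obtains p q where "support_fun X (- exp_mat A \<nu>1) = ereal p"
    and "support_fun X (- exp_mat A \<nu>2) = ereal (p + q)"
    and "support_fun X (- exp_mat A \<nu>) = ereal (l * p + (1 - l) * (p + q))"
proof -
  obtain p q where pq: "\<And>t. t \<in> {0..1} \<Longrightarrow>
      support_fun X (- exp_mat A (\<lambda>a. (1 - t) * \<nu>1 a + t * \<nu>2 a)) = ereal (p + q * t)"
    using assms(1) unfolding affine_on_segment_def by blast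
  show ?thesis
  proof (rule that)
    show "support_fun X (- exp_mat A \<nu>1) = ereal p" using pq[of 0] by simp
    show "support_fun X (- exp_mat A \<nu>2) = ereal (p + q)" using pq[of 1] by simp
    show "support_fun X (- exp_mat A \<nu>) = ereal (l * p + (1 - l) * (p + q))"
      using pq[of "1 - l"] assms(2-4) by (simp add: algebra_simps)
  qed
qed

subsection \<open>Relative entropy certificates for the AGE cone\<close>

lemma sum_exp_inner_factor:
  assumes "finite A" "\<beta> \<in> A"
  shows "(\<Sum>a\<in>A. g a * exp (a \<bullet> x))
           = exp (\<beta> \<bullet> x) * (g \<beta> + (\<Sum>a\<in>A - {\<beta>}. g a * exp ((a - \<beta>) \<bullet> x)))"
proof -
  have "exp (\<beta> \<bullet> x) * exp ((a - \<beta>) \<bullet> x) = exp (a \<bullet> x)" for a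
    by (simp add: inner_diff_left exp_diff)
  thus ?thesis
    using assms by (simp add: sum.remove sum_distrib_left distrib_left mult.left_commute)
qed

lemma exp_mat_inner_zero_sum:
  assumes "finite A" "\<beta> \<in> A" "(\<Sum>a\<in>A. \<mu> a) = 0"
  shows "exp_mat A \<mu> \<bullet> x = (\<Sum>a\<in>A - {\<beta>}. \<mu> a * ((a - \<beta>) \<bullet> x))"
proof -
  have "exp_mat A \<mu> \<bullet> x = (\<Sum>a\<in>A. \<mu> a * ((a - \<beta>) \<bullet> x)) + (\<Sum>a\<in>A. \<mu> a) * (\<beta> \<bullet> x)"
    unfolding exp_mat_def
    by (simp add: inner_sum_left inner_diff_left sum_distrib_right algebra_simps sum.distrib[symmetric])
  thus ?thesis using assms by (simp add: sum.remove)
qed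

lemma AGE_cone_certificate:
  fixes X :: "'a::euclidean_space set"
  assumes "finite A" "\<beta> \<in> A" "supp_in A g" "\<forall>a\<in>A - {\<beta>}. 0 \<le> g a"
    and "(\<Sum>a\<in>A. \<mu> a) = 0" "support_fun X (- exp_mat A \<mu>) \<le> ereal s"
    and "\<forall>a\<in>A - {\<beta>}. \<forall>t. \<mu> a * t - d a \<le> g a * exp t"
    and "s + (\<Sum>a\<in>A - {\<beta>}. d a) \<le> g \<beta>"
  shows "g \<in> AGE_cone X A \<beta>"
  unfolding AGE_cone_def
proof (intro CollectI conjI ballI)
  fix x assume "x \<in> X"
  hence "- exp_mat A \<mu> \<bullet> x \<le> s"
    using support_fun_ge[of x X] assms(6) by (metis ereal_less_eq(3) order.trans)
  hence "- s \<le> (\<Sum>a\<in>A - {\<beta>}. \<mu> a * ((a - \<beta>) \<bullet> x))"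
    using exp_mat_inner_zero_sum[OF assms(1,2,5)] by simp
  also have "\<dots> - (\<Sum>a\<in>A - {\<beta>}. d a) = (\<Sum>a\<in>A - {\<beta>}. \<mu> a * ((a - \<beta>) \<bullet> x) - d a)"
    by (simp add: sum_subtractf)
  also have "\<dots> \<le> (\<Sum>a\<in>A - {\<beta>}. g a * exp ((a - \<beta>) \<bullet> x))"
    using assms(7) by (intro sum_mono) blast
  finally have "0 \<le> g \<beta> + (\<Sum>a\<in>A - {\<beta>}. g a * exp ((a - \<beta>) \<bullet> x))"
    using assms(8) by linarith
  thus "0 \<le> (\<Sum>a\<in>A. g a * exp (a \<bullet> x))"
    unfolding sum_exp_inner_factor[OF assms(1,2)] by simp
qed (use assms in auto)

lemma AGE_cone_mono:
  assumes "g \<in> AGE_cone X A \<beta>" "supp_in A h" "\<forall>a\<in>A. g a \<le> h a"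
  shows "h \<in> AGE_cone X A \<beta>"
  unfolding AGE_cone_def
proof (intro CollectI conjI ballI)
  fix x assume "x \<in> X"
  hence "0 \<le> (\<Sum>a\<in>A. g a * exp (a \<bullet> x))" using assms(1) unfolding AGE_cone_def by blast
  also have "\<dots> \<le> (\<Sum>a\<in>A. h a * exp (a \<bullet> x))"
    using assms(3) by (intro sum_mono mult_right_mono) auto
  finally show "0 \<le> (\<Sum>a\<in>A. h a * exp (a \<bullet> x))" .
qed (use assms in \<open>auto simp: AGE_cone_def intro: order.trans\<close>)

lemma Fenchel_Young_exp:
  fixes m c n t :: real
  assumes "0 \<le> m" "0 < c" "0 < n"
  shows "m * t - m * ln (n / (exp 1 * c)) \<le> c * m / n * exp t"
proof -
  define u where "u = t + ln c - ln n"
  have "m * t - m * ln (n / (exp 1 * c)) = m * (1 + u)"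
    using assms by (simp add: u_def ln_div ln_mult algebra_simps)
  also have "\<dots> \<le> m * exp u"
    using assms(1) exp_ge_add_one_self[of u] by (rule mult_left_mono[rotated])
  also have "\<dots> = c * m / n * exp t"
    using assms by (simp add: u_def exp_add exp_diff)
  finally show ?thesis .
qed

text \<open>
  The share of c certified by the part m of \<nu>. Off \<beta> it is c_\<alpha> m_\<alpha> / \<nu>_\<alpha>, which is 0
  where \<nu>_\<alpha> = 0 because division by zero yields 0.
\<close>
definition entropy_piece ::
  "'a set \<Rightarrow> 'a \<Rightarrow> ('a \<Rightarrow> real) \<Rightarrow> ('a \<Rightarrow> real) \<Rightarrow> ('a \<Rightarrow> real) \<Rightarrow> real \<Rightarrow> 'a \<Rightarrow> real" where
  "entropy_piece A \<beta> c \<nu> m s a =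
     (if a \<in> A - {\<beta>} then c a * m a / \<nu> a
      else if a = \<beta> then s + (\<Sum>b\<in>A - {\<beta>}. m b * ln (\<nu> b / (exp 1 * c b)))
      else 0)"

lemma entropy_piece_in_AGE_cone:
  fixes X :: "'a::euclidean_space set"
  assumes "finite A" "\<beta> \<in> A"
    and part: "\<forall>a\<in>A - {\<beta>}. 0 \<le> m a \<and> m a \<le> \<nu> a"
    and pos: "\<forall>a\<in>A - {\<beta>}. \<nu> a \<noteq> 0 \<longrightarrow> 0 < c a"
    and "(\<Sum>a\<in>A. m a) = 0" "support_fun X (- exp_mat A m) \<le> ereal s"
  shows "entropy_piece A \<beta> c \<nu> m s \<in> AGE_cone X A \<beta>"
proof (rule AGE_cone_certificate[where \<mu> = m and d = "\<lambda>a. m a * ln (\<nu> a / (exp 1 * c a))"])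
  have coord: "0 < c a \<and> 0 < \<nu> a \<or> m a = 0 \<and> \<nu> a = 0" if "a \<in> A - {\<beta>}" for a
    using part pos that by force
  show "\<forall>a\<in>A - {\<beta>}. 0 \<le> entropy_piece A \<beta> c \<nu> m s a"
  proof
    fix a assume "a \<in> A - {\<beta>}"
    thus "0 \<le> entropy_piece A \<beta> c \<nu> m s a"
      using coord[of a] part unfolding entropy_piece_def by auto
  qed
  show "\<forall>a\<in>A - {\<beta>}. \<forall>t. m a * t - m a * ln (\<nu> a / (exp 1 * c a))
                          \<le> entropy_piece A \<beta> c \<nu> m s a * exp t"
    using coord part Fenchel_Young_exp unfolding entropy_piece_def by fastforce
qed (use assms in \<open>auto simp: supp_in_def entropy_piece_def\<close>)

lemma AGE_cone_split:
  fixes X :: "'a::euclidean_space set"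
  assumes "finite A" "\<beta> \<in> A" and c: "c \<in> AGE_cone X A \<beta>"
    and pos: "\<forall>a\<in>A - {\<beta>}. \<nu> a \<noteq> 0 \<longrightarrow> 0 < c a"
    and split: "\<And>a. \<nu> a = m1 a + m2 a"
    and nonneg: "\<forall>a\<in>A - {\<beta>}. 0 \<le> m1 a \<and> 0 \<le> m2 a"
    and "(\<Sum>a\<in>A. m1 a) = 0" "(\<Sum>a\<in>A. m2 a) = 0"
    and "support_fun X (- exp_mat A m1) \<le> ereal s1" "support_fun X (- exp_mat A m2) \<le> ereal s2"
    and slack: "s1 + s2 + (\<Sum>a\<in>A - {\<beta>}. \<nu> a * ln (\<nu> a / (exp 1 * c a))) \<le> c \<beta>"
  shows "entropy_piece A \<beta> c \<nu> m1 s1 \<in> AGE_cone X A \<beta>"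
    and "(\<lambda>a. c a - entropy_piece A \<beta> c \<nu> m1 s1 a) \<in> AGE_cone X A \<beta>"
proof -
  have parts: "\<forall>a\<in>A - {\<beta>}. 0 \<le> m a \<and> m a \<le> \<nu> a" if "m = m1 \<or> m = m2" for m
    using that nonneg split by force
  show "entropy_piece A \<beta> c \<nu> m1 s1 \<in> AGE_cone X A \<beta>"
    using assms parts by (intro entropy_piece_in_AGE_cone) auto
  have piece2: "entropy_piece A \<beta> c \<nu> m2 s2 \<in> AGE_cone X A \<beta>"
    using assms parts by (intro entropy_piece_in_AGE_cone) auto
  have c_cone: "supp_in A c" "\<forall>a\<in>A - {\<beta>}. 0 \<le> c a"
    using c unfolding AGE_cone_def by auto
  have "(\<Sum>a\<in>A - {\<beta>}. \<nu> a * ln (\<nu> a / (exp 1 * c a)))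
      = (\<Sum>a\<in>A - {\<beta>}. m1 a * ln (\<nu> a / (exp 1 * c a))) + (\<Sum>a\<in>A - {\<beta>}. m2 a * ln (\<nu> a / (exp 1 * c a)))"
    unfolding split by (simp add: distrib_right sum.distrib)
  hence "entropy_piece A \<beta> c \<nu> m2 s2 \<beta> \<le> c \<beta> - entropy_piece A \<beta> c \<nu> m1 s1 \<beta>"
    using slack unfolding entropy_piece_def by simp
  moreover have "entropy_piece A \<beta> c \<nu> m2 s2 a \<le> c a - entropy_piece A \<beta> c \<nu> m1 s1 a"
    if "a \<in> A - {\<beta>}" for a
    using that pos nonneg c_cone split[of a]
    by (cases "\<nu> a = 0") (auto simp: entropy_piece_def field_simps)
  ultimately have "\<forall>a\<in>A. entropy_piece A \<beta> c \<nu> m2 s2 a \<le> c a - entropy_piece A \<beta> c \<nu> m1 s1 a"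
    by blast
  moreover have "supp_in A (\<lambda>a. c a - entropy_piece A \<beta> c \<nu> m1 s1 a)"
    using c_cone(1) assms(2) by (simp add: supp_in_def entropy_piece_def)
  ultimately show "(\<lambda>a. c a - entropy_piece A \<beta> c \<nu> m1 s1 a) \<in> AGE_cone X A \<beta>"
    by (intro AGE_cone_mono[OF piece2])
qed

lemma supp_in_sum_eqI:
  assumes "finite A" "\<beta> \<in> A" "supp_in A u" "supp_in A v"
    and "(\<Sum>a\<in>A. u a) = (\<Sum>a\<in>A. v a)" "\<forall>a\<in>A - {\<beta>}. u a = v a"
  shows "u = v"
proof
  fix a
  have "u \<beta> = v \<beta>"
    using assms(1,2,5,6) by (simp add: sum.remove)
  thus "u a = v a" using assms(3,4,6) unfolding supp_in_def by (cases "a \<in> A") auto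
qed

lemma entropy_piece_eq_scaled:
  assumes "finite A" "\<beta> \<in> A" "supp_in A \<nu>" "supp_in A m"
    and "(\<Sum>a\<in>A. \<nu> a) = 0" "(\<Sum>a\<in>A. m a) = 0"
    and "\<forall>a\<in>A - {\<beta>}. 0 \<le> m a \<and> m a \<le> \<nu> a" "\<forall>a\<in>A - {\<beta>}. \<nu> a \<noteq> 0 \<longrightarrow> 0 < c a"
    and "entropy_piece A \<beta> c \<nu> m s = (\<lambda>a. t * c a)"
  shows "m = (\<lambda>a. t * \<nu> a)"
proof (rule supp_in_sum_eqI[OF assms(1,2,4)])
  show "supp_in A (\<lambda>a. t * \<nu> a)" using assms(3) by (simp add: supp_in_def)
  show "(\<Sum>a\<in>A. m a) = (\<Sum>a\<in>A. t * \<nu> a)" using assms(5,6) by (simp add: sum_distrib_left[symmetric])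
  show "\<forall>a\<in>A - {\<beta>}. m a = t * \<nu> a"
  proof
    fix a assume a: "a \<in> A - {\<beta>}"
    have "c a * m a / \<nu> a = t * c a"
      using fun_cong[OF assms(9), of a] a unfolding entropy_piece_def by simp
    show "m a = t * \<nu> a"
    proof (cases "\<nu> a = 0")
      case True
      thus ?thesis using assms(7) a by force
    next
      case False
      thus ?thesis using \<open>c a * m a / \<nu> a = t * c a\<close> assms(8) a by (auto simp: field_simps)
    qed
  qed
qed

subsection \<open>Splitting a non-circuit\<close>

lemma proportional_of_scaled_part:
  assumes "0 < l" "l < 1" "\<nu> = (\<lambda>a. l * \<nu>1 a + (1 - l) * \<nu>2 a)"
    and "(\<lambda>a. l * \<nu>1 a) = (\<lambda>a. t * \<nu> a)"
  shows "proportional \<nu>1 \<nu>2"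
proof -
  have part1: "l * \<nu>1 a = t * \<nu> a" for a
    using fun_cong[OF assms(4), of a] by simp
  have part2: "(1 - l) * \<nu>2 a = (1 - t) * \<nu> a" for a
    using fun_cong[OF assms(3), of a] part1[of a] by (simp add: algebra_simps)
  show ?thesis
  proof (cases "t = 1")
    case True
    hence "\<nu>2 = (\<lambda>a. 0 * \<nu>1 a)" using part2 assms(2) by auto
    thus ?thesis unfolding proportional_def by blast
  next
    case False
    have "\<nu>1 a = t * (1 - l) / (l * (1 - t)) * \<nu>2 a" for a
    proof -
      have "1 - t \<noteq> 0" "1 - l \<noteq> 0" "l \<noteq> 0" using False assms(1,2) by auto
      moreover have "\<nu>1 a = t * \<nu> a / l" "\<nu>2 a = (1 - t) * \<nu> a / (1 - l)"
        using part1[of a] part2[of a] assms(1,2) by (simp_all add: field_simps)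
      ultimately show ?thesis by simp
    qed
    thus ?thesis unfolding proportional_def by blast
  qed
qed

lemma not_X_circuit_split:
  fixes X :: "'a::euclidean_space set"
  assumes "\<nu> \<in> N_set A \<beta>" "\<nu> \<noteq> (\<lambda>_. 0)" "support_fun X (- exp_mat A \<nu>) = ereal s"
    and "\<not> X_circuit X A \<beta> \<nu>"
  obtains m1 m2 s1 s2 where "\<And>a. \<nu> a = m1 a + m2 a"
    and "\<forall>a\<in>A - {\<beta>}. 0 \<le> m1 a \<and> 0 \<le> m2 a" and "supp_in A m1"
    and "(\<Sum>a\<in>A. m1 a) = 0" "(\<Sum>a\<in>A. m2 a) = 0"
    and "support_fun X (- exp_mat A m1) \<le> ereal s1" "support_fun X (- exp_mat A m2) \<le> ereal s2"
    and "s1 + s2 = s" and "\<And>t. m1 \<noteq> (\<lambda>a. t * \<nu> a)"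
proof -
  obtain \<nu>1 \<nu>2 l where N: "\<nu>1 \<in> N_set A \<beta>" "\<nu>2 \<in> N_set A \<beta>"
    and not_prop: "\<not> proportional \<nu>1 \<nu>2" and l: "0 < l" "l < 1"
    and \<nu>: "\<nu> = (\<lambda>a. l * \<nu>1 a + (1 - l) * \<nu>2 a)" and aff: "affine_on_segment X A \<nu>1 \<nu>2"
    using assms unfolding X_circuit_def by auto
  have l01: "0 \<le> l" "l \<le> 1" using l by auto
  obtain p q where \<sigma>1: "support_fun X (- exp_mat A \<nu>1) = ereal p"
    and \<sigma>2: "support_fun X (- exp_mat A \<nu>2) = ereal (p + q)"
    and \<sigma>: "support_fun X (- exp_mat A \<nu>) = ereal (l * p + (1 - l) * (p + q))"
    using affine_on_segment_values[OF aff l01 \<nu>] by blast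
  show ?thesis
  proof (rule that[of "\<lambda>a. l * \<nu>1 a" "\<lambda>a. (1 - l) * \<nu>2 a" "l * p" "(1 - l) * (p + q)"])
    show "support_fun X (- exp_mat A (\<lambda>a. l * \<nu>1 a)) \<le> ereal (l * p)"
      using support_fun_scaleR_le[of X "- exp_mat A \<nu>1" p l] \<sigma>1 l by (simp add: exp_mat_scale)
    show "support_fun X (- exp_mat A (\<lambda>a. (1 - l) * \<nu>2 a)) \<le> ereal ((1 - l) * (p + q))"
      using support_fun_scaleR_le[of X "- exp_mat A \<nu>2" "p + q" "1 - l"] \<sigma>2 l by (simp add: exp_mat_scale)
    show "l * p + (1 - l) * (p + q) = s" using \<sigma> assms(3) by simp
    show "(\<lambda>a. l * \<nu>1 a) \<noteq> (\<lambda>a. t * \<nu> a)" for t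
      using proportional_of_scaled_part[OF l \<nu>] not_prop by blast
    show "\<nu> a = l * \<nu>1 a + (1 - l) * \<nu>2 a" for a using \<nu> by simp
    show "\<forall>a\<in>A - {\<beta>}. 0 \<le> l * \<nu>1 a \<and> 0 \<le> (1 - l) * \<nu>2 a"
      using N l01 unfolding N_set_def by simp
    show "supp_in A (\<lambda>a. l * \<nu>1 a)" using N unfolding N_set_def supp_in_def by simp
    show "(\<Sum>a\<in>A. l * \<nu>1 a) = 0" "(\<Sum>a\<in>A. (1 - l) * \<nu>2 a) = 0"
      using N unfolding N_set_def by (simp_all add: sum_distrib_left[symmetric])
  qed
qed

theorem theorem4p2:
  fixes X :: "'a::euclidean_space set" and A :: "'a set" and \<beta> :: 'a
    and c nu :: "'a \<Rightarrow> real"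
  assumes "closed X" and "convex X" and "X \<noteq> {}"
    and "finite A" and "A \<noteq> {}"
    and "\<forall>l :: 'a \<Rightarrow> real. (\<forall>x\<in>X. (\<Sum>a\<in>A. l a * exp (a \<bullet> x)) = 0) \<longrightarrow> (\<forall>a\<in>A. l a = 0)"
    and "\<beta> \<in> A"
    and "c \<in> AGE_cone X A \<beta>" and "c \<beta> < 0"
    and "supp_in A nu" and "nu \<noteq> (\<lambda>_. 0)" and "(\<Sum>a\<in>A. nu a) = 0"
    and "support_fun X (- exp_mat A nu) + rel_entr (A - {\<beta>}) nu (\<lambda>a. exp 1 * c a) \<le> ereal (c \<beta>)"
    and "\<not> X_circuit X A \<beta> nu"
  shows "\<not> generates_extreme_ray (AGE_cone X A \<beta>) c"
proof
  assume extreme: "generates_extreme_ray (AGE_cone X A \<beta>) c"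
  obtain s where \<sigma>: "support_fun X (- exp_mat A nu) = ereal s"
    and nonneg: "\<forall>a\<in>A - {\<beta>}. 0 \<le> nu a" and pos: "\<forall>a\<in>A - {\<beta>}. nu a \<noteq> 0 \<longrightarrow> 0 < c a"
    and slack: "s + (\<Sum>a\<in>A - {\<beta>}. nu a * ln (nu a / (exp 1 * c a))) \<le> c \<beta>"
    by (rule entropy_condition_finite[OF assms(4,3,13)])
  have "nu \<in> N_set A \<beta>" using assms(10,12) nonneg unfolding N_set_def by blast
  obtain m1 m2 s1 s2 where split: "\<And>a. nu a = m1 a + m2 a"
    and parts: "\<forall>a\<in>A - {\<beta>}. 0 \<le> m1 a \<and> 0 \<le> m2 a" and "supp_in A m1"
    and sums: "(\<Sum>a\<in>A. m1 a) = 0" "(\<Sum>a\<in>A. m2 a) = 0"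
    and bounds: "support_fun X (- exp_mat A m1) \<le> ereal s1" "support_fun X (- exp_mat A m2) \<le> ereal s2"
    and "s1 + s2 = s" and not_multiple: "\<And>t. m1 \<noteq> (\<lambda>a. t * nu a)"
    using not_X_circuit_split[OF \<open>nu \<in> N_set A \<beta>\<close> assms(11) \<sigma> assms(14)] by blast
  let ?g = "entropy_piece A \<beta> c nu m1 s1"
  have "s1 + s2 + (\<Sum>a\<in>A - {\<beta>}. nu a * ln (nu a / (exp 1 * c a))) \<le> c \<beta>"
    using slack \<open>s1 + s2 = s\<close> by simp
  note pieces = AGE_cone_split[OF assms(4,7,8) pos split parts sums bounds this]
  have "c = (\<lambda>a. ?g a + (c a - ?g a))" by simp
  then obtain t where "?g = (\<lambda>a. t * c a)"
    using extreme pieces unfolding generates_extreme_ray_def by blast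
  moreover have "\<forall>a\<in>A - {\<beta>}. 0 \<le> m1 a \<and> m1 a \<le> nu a" using parts split by force
  ultimately have "m1 = (\<lambda>a. t * nu a)"
    using entropy_piece_eq_scaled[OF assms(4,7,10) \<open>supp_in A m1\<close> assms(12) sums(1)] pos by blast
  with not_multiple show False by blast
qed

end
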